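(* Consider a rooted search tree in which every internal node has exactly $b\ge 1$ children and every leaf is at depth $d$. For each internal node $S$ and each action $A$ available at $S$, let $P_{\textrm{best}}(A\mid S)\in[0,1]$ with $\sum_{A} P_{\textrm{best}}(A\mid S)=1$ over the $b$ actions at $S$; these values become known only when $S$ is explored. Let $P_{\textrm{uni}}=1/b$. Given a set $\mathcal{E}$ of explored internal nodes, define for each leaf $\hat S$ with root-to-leaf path $S_0\xrightarrow{A_0}S_1\xrightarrow{A_1}\cdots\xrightarrow{A_{d-1}}S_d=\hat S$ $$P_{\textrm{opt}}(\hat S)=\prod_{k:\,S_k\in\mathcal{E}} P_{\textrm{best}}(A_k\mid S_k)\cdot\prod_{k:\,S_k\notin\mathcal{E},\,0\le k\le d-1} P_{\textrm{uni}} .$$ Suppose initially no node is explored, and run the greedy procedure: starting at the root, explore the current state $S$ and move along an action $A$ maximizing $P_{\textrm{best}}(A\mid S)$, repeating until a leaf is reached. Then the greedy procedure explores at most $d$ nodes, and the leaf it reaches maximizes $P_{\textrm{opt}}(\hat S)$ over all leaves $\hat S$, where $P_{\textrm{opt}}$ is computed with $\mathcal{E}$ equal to the set of nodes explored by the greedy procedure.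
   Context: A search problem is modelled as a tree whose nodes are states and edges are actions; each root-to-leaf path (leaf) is a candidate solution. $P_{\textrm{best}}(A\mid S)$ is the probability that the optimal candidate solution in the subtree rooted at $S$ lies in the subtree reached by taking action $A$ from $S$. The standing modelling assumptions are: in unexplored parts of the tree the action probabilities are taken to be uniform, equal to $P_{\textrm{uni}}=1/b$; the depth $d$ of the tree is uniform and known; the branching factor $b$ is constant and known. $P_{\textrm{opt}}(\hat S)$ is the (estimated) probability that candidate solution $\hat S$ is the optimal one. *)

theory Defs
  imports Complex_Main
begin

text \<open>Nodes of the search tree are encoded by the list of actions taken from the root;
  the actions available at any internal node are 0,...,b-1. A node is a list of length
  at most d with entries below b; leaves have length exactly d.\<close>

definition is_node :: "nat \<Rightarrow> nat \<Rightarrow> nat list \<Rightarrow> bool" where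
  "is_node b d s \<longleftrightarrow> length s \<le> d \<and> (\<forall>a\<in>set s. a < b)"

definition is_internal :: "nat \<Rightarrow> nat \<Rightarrow> nat list \<Rightarrow> bool" where
  "is_internal b d s \<longleftrightarrow> is_node b d s \<and> length s < d"

definition is_leaf :: "nat \<Rightarrow> nat \<Rightarrow> nat list \<Rightarrow> bool" where
  "is_leaf b d s \<longleftrightarrow> is_node b d s \<and> length s = d"

definition P_uni :: "nat \<Rightarrow> real" where
  "P_uni b = 1 / real b"

text \<open>P_opt of a leaf l given the explored set E; the k-th node on the path is take k l,
  and the action taken there is l ! k.\<close>
definition P_opt :: "nat \<Rightarrow> nat \<Rightarrow> (nat list \<Rightarrow> nat \<Rightarrow> real) \<Rightarrow> nat list set \<Rightarrow> nat list \<Rightarrow> real" where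
  "P_opt b d Pbest E l =
     (\<Prod>k<d. if take k l \<in> E then Pbest (take k l) (l ! k) else P_uni b)"

text \<open>A run of the greedy procedure (with arbitrary tie breaking): the sequence of actions
  chosen, where at each visited state the chosen action maximises Pbest over all b actions.\<close>
definition greedy_run :: "nat \<Rightarrow> nat \<Rightarrow> (nat list \<Rightarrow> nat \<Rightarrow> real) \<Rightarrow> nat list \<Rightarrow> bool" where
  "greedy_run b d Pbest g \<longleftrightarrow> length g = d \<and>
     (\<forall>k<d. g ! k < b \<and> (\<forall>a<b. Pbest (take k g) a \<le> Pbest (take k g) (g ! k)))"

definition greedy_explored :: "nat \<Rightarrow> nat list \<Rightarrow> nat list set" where
  "greedy_explored d g = {take k g | k. k < d}"

end

theory Submission
  imports Defs
begin

text \<open>Every node the greedy run explores lies on its own path, so a leaf \<open>l\<close> meets the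
  explored set at depth \<open>k\<close> only if it shares the greedy prefix of length \<open>k\<close>. Hence each
  factor of \<open>P_opt l\<close> is either \<open>P_uni\<close>, or \<open>Pbest\<close> of some action at a greedy state; the
  corresponding factor of \<open>P_opt g\<close> is the maximal \<open>Pbest\<close> at that state, which dominates
  both, since the maximum of \<open>b\<close> numbers summing to \<open>1\<close> is at least \<open>1/b\<close>.\<close>

lemma P_uni_le_max_of_sum_eq_1:
  fixes f :: "nat \<Rightarrow> real"
  assumes "(\<Sum>a<b. f a) = 1" and "\<And>a. a < b \<Longrightarrow> f a \<le> f m"
  shows "P_uni b \<le> f m"
proof -
  have "1 \<le> (\<Sum>a<b. f m)"
    using assms by (metis lessThan_iff sum_mono)
  then have "1 \<le> real b * f m" by simp
  moreover have "b \<noteq> 0" using assms(1) by (metis lessThan_0 sum.empty zero_neq_one)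
  ultimately show ?thesis by (simp add: P_uni_def field_simps)
qed

lemma greedy_run_is_leaf:
  "greedy_run b d Pbest g \<Longrightarrow> is_leaf b d g"
  by (auto simp: greedy_run_def is_leaf_def is_node_def in_set_conv_nth)

lemma is_internal_take:
  "is_leaf b d l \<Longrightarrow> k < d \<Longrightarrow> is_internal b d (take k l)"
  by (auto simp: is_leaf_def is_internal_def is_node_def dest: in_set_takeD)

lemma greedy_explored_eq_image:
  "greedy_explored d g = (\<lambda>k. take k g) ` {..<d}"
  by (auto simp: greedy_explored_def)

lemma card_greedy_explored_le: "card (greedy_explored d g) \<le> d"
  unfolding greedy_explored_eq_image
  using card_image_le[of "{..<d}" "\<lambda>k. take k g"] by simp

lemma take_in_greedy_explored_iff:
  assumes "k < d" and "k \<le> length l" and "d \<le> length g"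
  shows "take k l \<in> greedy_explored d g \<longleftrightarrow> take k l = take k g"
proof
  assume "take k l \<in> greedy_explored d g"
  then obtain j where "j < d" and eq: "take k l = take j g"
    by (auto simp: greedy_explored_def)
  have "length (take k l) = length (take j g)" using eq by (rule arg_cong)
  then have "j = k" using assms \<open>j < d\<close> by (simp add: min_def split: if_splits)
  then show "take k l = take k g" using eq by simp
qed (use assms(1) in \<open>auto simp: greedy_explored_def\<close>)

lemma P_opt_le_greedy:
  assumes nonneg: "\<And>s a. is_internal b d s \<Longrightarrow> a < b \<Longrightarrow> 0 \<le> Pbest s a"
    and sum_eq_1: "\<And>s. is_internal b d s \<Longrightarrow> (\<Sum>a<b. Pbest s a) = 1"
    and greedy: "greedy_run b d Pbest g"
    and leaf: "is_leaf b d l"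
  shows "P_opt b d Pbest (greedy_explored d g) l \<le> P_opt b d Pbest (greedy_explored d g) g"
  unfolding P_opt_def
proof (rule prod_mono, safe)
  fix k assume "k < d"
  let ?E = "greedy_explored d g"
  have len: "length l = d" "length g = d" and lk: "l ! k < b"
    using leaf greedy \<open>k < d\<close> by (auto simp: is_leaf_def is_node_def greedy_run_def)
  have g_in: "take k g \<in> ?E" and l_in: "take k l \<in> ?E \<longleftrightarrow> take k l = take k g"
    using take_in_greedy_explored_iff[OF \<open>k < d\<close>] len \<open>k < d\<close>
    by (auto simp: greedy_explored_def)
  have internal: "is_internal b d (take k g)" "is_internal b d (take k l)"
    using is_internal_take[OF greedy_run_is_leaf[OF greedy]] is_internal_take[OF leaf] \<open>k < d\<close>
    by auto
  have max: "\<And>a. a < b \<Longrightarrow> Pbest (take k g) a \<le> Pbest (take k g) (g ! k)"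
    using greedy \<open>k < d\<close> by (simp add: greedy_run_def)
  have "P_uni b \<le> Pbest (take k g) (g ! k)"
    by (rule P_uni_le_max_of_sum_eq_1[OF sum_eq_1[OF internal(1)] max])
  then show "(if take k l \<in> ?E then Pbest (take k l) (l ! k) else P_uni b)
      \<le> (if take k g \<in> ?E then Pbest (take k g) (g ! k) else P_uni b)"
    using g_in l_in max lk by auto
  show "0 \<le> (if take k l \<in> ?E then Pbest (take k l) (l ! k) else P_uni b)"
    using nonneg[OF internal(2) lk] by (simp add: P_uni_def)
qed

theorem theorem1:
  fixes b d :: nat and Pbest :: "nat list \<Rightarrow> nat \<Rightarrow> real" and g :: "nat list"
  assumes "b \<ge> 1"
    and "\<And>s a. is_internal b d s \<Longrightarrow> a < b \<Longrightarrow> 0 \<le> Pbest s a \<and> Pbest s a \<le> 1"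
    and "\<And>s. is_internal b d s \<Longrightarrow> (\<Sum>a<b. Pbest s a) = 1"
    and "greedy_run b d Pbest g"
  shows "is_leaf b d g \<and> greedy_explored d g \<subseteq> {s. is_internal b d s}
    \<and> card (greedy_explored d g) \<le> d
    \<and> (\<forall>l. is_leaf b d l \<longrightarrow>
          P_opt b d Pbest (greedy_explored d g) l \<le> P_opt b d Pbest (greedy_explored d g) g)"
proof -
  have leaf: "is_leaf b d g" using assms(4) by (rule greedy_run_is_leaf)
  moreover have "greedy_explored d g \<subseteq> {s. is_internal b d s}"
    using is_internal_take[OF leaf] by (auto simp: greedy_explored_def)
  moreover have "P_opt b d Pbest (greedy_explored d g) l \<le> P_opt b d Pbest (greedy_explored d g) g"
    if "is_leaf b d l" for l
    using P_opt_le_greedy[OF _ assms(3,4) that] assms(2) by blast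
  ultimately show ?thesis using card_greedy_explored_le by blast
qed

end
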